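(* For a group $G$, the following are equivalent: (A) $G = S(G)$; (B) every subgroup of finite index of $G$ is exponential in $G$; (C) every finite quotient of $G$ is nilpotent; (D) every subgroup of finite index of $G$ is subnormal in $G$.
   Context: $S(G) := \{ x \in G : x^{|G:H|} \in H \text{ for every subgroup } H \leqslant G \text{ of finite index}\}$. A subgroup $H$ of finite index in $G$ is exponential in $G$ if $x^{|G:H|} \in H$ for every $x \in G$. $H$ is subnormal in $G$ if there is a finite chain $H = H_0 \lhd H_1 \lhd \dots \lhd H_r = G$. *)

theory Defs
  imports "HOL-Algebra.Algebra"
begin

definition commutators :: "('a, 'b) monoid_scheme \<Rightarrow> 'a set \<Rightarrow> 'a set \<Rightarrow> 'a set" where
  "commutators G H K =
     {h \<otimes>\<^bsub>G\<^esub> k \<otimes>\<^bsub>G\<^esub> inv\<^bsub>G\<^esub> h \<otimes>\<^bsub>G\<^esub> inv\<^bsub>G\<^esub> k | h k. h \<in> H \<and> k \<in> K}"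

text \<open>Lower central series: gamma_1 = G, gamma_{i+1} = [gamma_i, G] (indexed from 0).\<close>
fun lower_central :: "('a, 'b) monoid_scheme \<Rightarrow> nat \<Rightarrow> 'a set" where
  "lower_central G 0 = carrier G"
| "lower_central G (Suc n) = generate G (commutators G (lower_central G n) (carrier G))"

definition nilpotent_group :: "('a, 'b) monoid_scheme \<Rightarrow> bool" where
  "nilpotent_group G \<longleftrightarrow> group G \<and> (\<exists>n. lower_central G n = {\<one>\<^bsub>G\<^esub>})"

definition finite_index :: "('a, 'b) monoid_scheme \<Rightarrow> 'a set \<Rightarrow> bool" where
  "finite_index G H \<longleftrightarrow> subgroup H G \<and> finite (rcosets\<^bsub>G\<^esub> H)"

definition group_index :: "('a, 'b) monoid_scheme \<Rightarrow> 'a set \<Rightarrow> nat" where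
  "group_index G H = card (rcosets\<^bsub>G\<^esub> H)"

definition exponential :: "('a, 'b) monoid_scheme \<Rightarrow> 'a set \<Rightarrow> bool" where
  "exponential G H \<longleftrightarrow> finite_index G H \<and>
     (\<forall>x\<in>carrier G. x [^]\<^bsub>G\<^esub> group_index G H \<in> H)"

definition S_set :: "('a, 'b) monoid_scheme \<Rightarrow> 'a set" where
  "S_set G = {x \<in> carrier G. \<forall>H. finite_index G H \<longrightarrow> x [^]\<^bsub>G\<^esub> group_index G H \<in> H}"

definition subnormal :: "('a, 'b) monoid_scheme \<Rightarrow> 'a set \<Rightarrow> bool" where
  "subnormal G H \<longleftrightarrow> (\<exists>hs :: 'a set list. hs \<noteq> [] \<and> hd hs = H \<and> last hs = carrier G \<and>
     (\<forall>i. Suc i < length hs \<longrightarrow> hs ! i \<lhd> G\<lparr>carrier := hs ! Suc i\<rparr>))"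

end

theory Submission
  imports Defs
begin

text \<open>
  (A) and (B) are the same statement. For (D) \<Longrightarrow> (B), walk down a subnormal chain
  \<open>H = H\<^sub>0 \<lhd> H\<^sub>1 \<lhd> \<dots> \<lhd> H\<^sub>r = G\<close>: the tower law \<open>|G:H\<^sub>i| = |G:H\<^sub>i\<^sub>+\<^sub>1| |H\<^sub>i\<^sub>+\<^sub>1:H\<^sub>i|\<close> and
  Lagrange's theorem in the finite group \<open>H\<^sub>i\<^sub>+\<^sub>1/H\<^sub>i\<close> give \<open>x\<^bsup>|G:H\<^sub>i|\<^esup> \<in> H\<^sub>i\<close>.
  For (C) \<Longrightarrow> (D), a subgroup \<open>H\<close> of finite index contains a normal subgroup \<open>K\<close> of finite
  index; \<open>G/K\<close> is nilpotent, so \<open>\<gamma>\<^sub>n(G) \<subseteq> K \<subseteq> H\<close>, and then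
  \<open>H = H\<gamma>\<^sub>n \<lhd> H\<gamma>\<^sub>n\<^sub>-\<^sub>1 \<lhd> \<dots> \<lhd> H\<gamma>\<^sub>0 = G\<close>.
  For (B) \<Longrightarrow> (C), property (B) passes to every finite quotient \<open>Q\<close>. There each Sylow
  \<open>p\<close>-subgroup is the set of solutions of \<open>x\<^bsup>|Q|\<^sub>p\<^esup> = 1\<close>, because its index is prime to \<open>p\<close>;
  so all Sylow subgroups are normal and commute elementwise. Hence the conjugacy classes inside the
  Sylow \<open>p\<close>-subgroup have \<open>p\<close>-power size, and counting modulo \<open>p\<close> yields a non-trivial central
  element. Applied to the quotients of \<open>Q\<close>, this makes the upper central series reach \<open>Q\<close>, so
  \<open>Q\<close> is nilpotent.
\<close>

section \<open>Cosets and indices\<close>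

lemma image_factor_through:
  assumes "\<And>x y. x \<in> A \<Longrightarrow> y \<in> A \<Longrightarrow> f x = f y \<Longrightarrow> g x = g y"
  shows "g ` A = (\<lambda>b. g (inv_into A f b)) ` f ` A"
proof
  show "g ` A \<subseteq> (\<lambda>b. g (inv_into A f b)) ` f ` A"
  proof
    fix z assume "z \<in> g ` A"
    then obtain x where x: "x \<in> A" "z = g x" by auto
    have "inv_into A f (f x) \<in> A" "f (inv_into A f (f x)) = f x"
      using x by (auto intro: inv_into_into f_inv_into_f)
    then have "g (inv_into A f (f x)) = g x" using assms x(1) by blast
    then show "z \<in> (\<lambda>b. g (inv_into A f b)) ` f ` A" using x by force
  qed
qed (auto intro: inv_into_into)

lemma finite_image_factor_through:
  assumes "\<And>x y. x \<in> A \<Longrightarrow> y \<in> A \<Longrightarrow> f x = f y \<Longrightarrow> g x = g y" and "finite (f ` A)"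
  shows "finite (g ` A)"
  using image_factor_through[of A f g, OF assms(1)] assms(2) by (metis finite_imageI)

lemma card_image_eq_if_same_fibres:
  assumes "\<And>x y. x \<in> A \<Longrightarrow> y \<in> A \<Longrightarrow> f x = f y \<longleftrightarrow> g x = g y"
  shows "card (f ` A) = card (g ` A)"
proof -
  have g: "g ` A = (\<lambda>b. g (inv_into A f b)) ` f ` A"
    by (rule image_factor_through) (use assms in blast)
  have f: "f ` A = (\<lambda>b. f (inv_into A g b)) ` g ` A"
    by (rule image_factor_through) (use assms in blast)
  show ?thesis
  proof (cases "finite (f ` A)")
    case True
    then have "finite (g ` A)" using g by (metis finite_imageI)
    then show ?thesis using True g f by (metis card_image_le le_antisym)
  next
    case False
    then have "infinite (g ` A)" using f by (metis finite_imageI)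
    then show ?thesis using False by simp
  qed
qed

lemma (in group) inv_mult_cancel_left [simp]:
  assumes "x \<in> carrier G" "y \<in> carrier G"
  shows "inv x \<otimes> (x \<otimes> y) = y" "x \<otimes> (inv x \<otimes> y) = y"
  using assms by (simp_all add: m_assoc[symmetric])

lemma (in group) rcos_eq_iff:
  assumes "subgroup H G" "x \<in> carrier G" "y \<in> carrier G"
  shows "H #> x = H #> y \<longleftrightarrow> x \<otimes> inv y \<in> H"
  using assms repr_independence repr_independenceD subgroup.rcos_module[OF assms(1) is_group]
  by metis

lemma (in group) rcosets_eq_image: "rcosets H = (\<lambda>x. H #> x) ` carrier G"
  by (auto simp: RCOSETS_def)

lemma (in group) finite_rcosets_mono:
  assumes H: "subgroup H G" and K: "subgroup K G" and HK: "H \<subseteq> K" and fin: "finite (rcosets H)"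
  shows "finite (rcosets K)"
proof -
  have "K #> x = K #> y" if "x \<in> carrier G" "y \<in> carrier G" "H #> x = H #> y" for x y
    using that rcos_eq_iff[OF H] rcos_eq_iff[OF K] HK by blast
  then show ?thesis
    using finite_image_factor_through[of "carrier G" "\<lambda>x. H #> x"] fin
    unfolding rcosets_eq_image by blast
qed

lemma (in group) bij_betw_rcosets_in_rcos:
  assumes H: "subgroup H G" and K: "subgroup K G" and HK: "H \<subseteq> K" and x: "x \<in> carrier G"
  shows "bij_betw (\<lambda>C. C #> x) (rcosets\<^bsub>G\<lparr>carrier := K\<rparr>\<^esub> H) {A \<in> rcosets H. A \<subseteq> K #> x}"
proof -
  have Hc: "H \<subseteq> carrier G" and Kc: "K \<subseteq> carrier G" using H K subgroup.subset by blast+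
  have "rcosets\<^bsub>G\<lparr>carrier := K\<rparr>\<^esub> H = (\<lambda>k. H #> k) ` K" by (auto simp: RCOSETS_def r_coset_def)
  moreover have "bij_betw (\<lambda>C. C #> x) ((\<lambda>k. H #> k) ` K) {A \<in> rcosets H. A \<subseteq> K #> x}"
  proof (rule bij_betw_imageI)
    show "inj_on (\<lambda>C. C #> x) ((\<lambda>k. H #> k) ` K)"
    proof (rule inj_onI)
      fix C D assume "C \<in> (\<lambda>k. H #> k) ` K" "D \<in> (\<lambda>k. H #> k) ` K" and e: "C #> x = D #> x"
      then have "C \<subseteq> carrier G" "D \<subseteq> carrier G" using Hc Kc by (auto simp: r_coset_def)
      moreover have "C #> x #> inv x = D #> x #> inv x" using e by simp
      ultimately show "C = D" using x by (simp add: coset_mult_assoc)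
    qed
    show "(\<lambda>C. C #> x) ` (\<lambda>k. H #> k) ` K = {A \<in> rcosets H. A \<subseteq> K #> x}"
    proof (intro equalityI subsetI)
      fix A assume "A \<in> (\<lambda>C. C #> x) ` (\<lambda>k. H #> k) ` K"
      then obtain k where k: "k \<in> K" "A = H #> k #> x" by auto
      have kc: "k \<in> carrier G" using k Kc by auto
      have "A = H #> (k \<otimes> x)" using k kc x Hc by (simp add: coset_mult_assoc)
      moreover have "H #> (k \<otimes> x) \<subseteq> K #> x"
        using HK k kc x Hc subgroup.m_closed[OF K]
        by (auto simp: r_coset_def m_assoc[symmetric] subset_iff)
      ultimately show "A \<in> {A \<in> rcosets H. A \<subseteq> K #> x}" using kc x by (simp add: rcosetsI[OF Hc])
    next
      fix A assume "A \<in> {A \<in> rcosets H. A \<subseteq> K #> x}"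
      then have Ar: "A \<in> rcosets H" and AK: "A \<subseteq> K #> x" by auto
      obtain y where y: "y \<in> carrier G" "A = H #> y" using Ar by (auto simp: RCOSETS_def)
      have "y \<in> K #> x" using AK y rcos_self[OF y(1) H] by auto
      then obtain k where k: "k \<in> K" "y = k \<otimes> x" by (auto simp: r_coset_def)
      have "A = (H #> k) #> x" using y k Kc x Hc by (simp add: coset_mult_assoc subset_iff)
      then show "A \<in> (\<lambda>C. C #> x) ` (\<lambda>k. H #> k) ` K" using k by auto
    qed
  qed
  ultimately show ?thesis by simp
qed

lemma (in group) card_rcosets_tower:
  assumes H: "subgroup H G" and K: "subgroup K G" and HK: "H \<subseteq> K" and fH: "finite (rcosets H)"
  shows "card (rcosets H) = card (rcosets K) * card (rcosets\<^bsub>G\<lparr>carrier := K\<rparr>\<^esub> H)"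
proof -
  have Kc: "K \<subseteq> carrier G" using K subgroup.subset by blast
  define piece where "piece B = {A \<in> rcosets H. A \<subseteq> B}" for B
  have card_piece: "card (piece B) = card (rcosets\<^bsub>G\<lparr>carrier := K\<rparr>\<^esub> H)" if "B \<in> rcosets K" for B
    using that bij_betw_same_card[OF bij_betw_rcosets_in_rcos[OF H K HK]]
    by (auto simp: RCOSETS_def piece_def)
  have union: "rcosets H = \<Union>(piece ` (rcosets K))"
  proof (intro equalityI subsetI)
    fix A assume A: "A \<in> rcosets H"
    then obtain y where y: "y \<in> carrier G" "A = H #> y" by (auto simp: RCOSETS_def)
    have "A \<subseteq> K #> y" using y HK by (auto simp: r_coset_def)
    then show "A \<in> \<Union>(piece ` (rcosets K))" using A y by (auto simp: piece_def rcosetsI[OF Kc])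
  qed (auto simp: piece_def)
  have disj: "piece B1 \<inter> piece B2 = {}"
    if "B1 \<in> rcosets K" "B2 \<in> rcosets K" "B1 \<noteq> B2" for B1 B2
  proof -
    have "B1 \<inter> B2 = {}" using rcos_disjoint[OF K] that by (auto simp: pairwise_def disjnt_def)
    moreover have "A \<noteq> {}" if "A \<in> rcosets H" for A
      using that rcos_self[OF _ H] by (auto simp: RCOSETS_def)
    ultimately show ?thesis unfolding piece_def by blast
  qed
  have "finite (piece B)" for B using fH by (simp add: piece_def)
  then have "card (rcosets H) = (\<Sum>B\<in>rcosets K. card (piece B))"
    unfolding union using finite_rcosets_mono[OF H K HK fH] disj by (simp add: card_UN_disjoint)
  also have "\<dots> = card (rcosets K) * card (rcosets\<^bsub>G\<lparr>carrier := K\<rparr>\<^esub> H)" using card_piece by simp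
  finally show ?thesis .
qed

text \<open>No finiteness is needed: for infinite index \<open>card\<close> yields \<open>0\<close>.\<close>
lemma (in normal) pow_card_rcosets_mem:
  assumes x: "x \<in> carrier G"
  shows "x [^] card (rcosets H) \<in> H"
proof -
  interpret Q: group "G Mod H" by (rule factorgroup_is_group)
  have "order (G Mod H) = card (rcosets H)" by (simp add: order_def FactGroup_def)
  moreover have "H #> x \<in> carrier (G Mod H)" using x carrier_FactGroup by blast
  ultimately have "(H #> x) [^]\<^bsub>G Mod H\<^esub> card (rcosets H) = H"
    using Q.pow_order_eq_1 by (simp add: FactGroup_def)
  then have "H #> (x [^] card (rcosets H)) = H" using FactGroup_pow[OF x] by simp
  moreover have "x [^] card (rcosets H) \<in> H #> (x [^] card (rcosets H))"
    using x is_subgroup by (simp add: rcos_self)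
  ultimately show ?thesis by simp
qed

lemma (in normal) group_hom_Mod: "group_hom G (G Mod H) (\<lambda>a. H #> a)"
  using r_coset_hom_Mod factorgroup_is_group
  by (simp add: group_hom_def group_hom_axioms_def)


section \<open>Subnormal subgroups of finite index are exponential\<close>

lemma subnormal_iff_chain:
  "subnormal G H \<longleftrightarrow>
     (\<exists>(f :: nat \<Rightarrow> 'a set) n. f 0 = H \<and> f n = carrier G \<and>
        (\<forall>i<n. f i \<lhd> G\<lparr>carrier := f (Suc i)\<rparr>))"
proof
  assume "subnormal G H"
  then obtain hs where hs: "hs \<noteq> []" "hd hs = H" "last hs = carrier G"
    "\<forall>i. Suc i < length hs \<longrightarrow> hs ! i \<lhd> G\<lparr>carrier := hs ! Suc i\<rparr>"
    unfolding subnormal_def by blast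
  then have "(!) hs 0 = H" "(!) hs (length hs - 1) = carrier G"
    by (simp_all add: hd_conv_nth last_conv_nth)
  moreover have "\<forall>i < length hs - 1. hs ! i \<lhd> G\<lparr>carrier := hs ! Suc i\<rparr>" using hs(4) by simp
  ultimately show "\<exists>f n. f 0 = H \<and> f n = carrier G \<and> (\<forall>i<n. f i \<lhd> G\<lparr>carrier := f (Suc i)\<rparr>)"
    by blast
next
  assume "\<exists>f n. f 0 = H \<and> f n = carrier G \<and> (\<forall>i<n. f i \<lhd> G\<lparr>carrier := f (Suc i)\<rparr>)"
  then obtain f n where "f 0 = H" "f n = carrier G" "\<forall>i<n. f i \<lhd> G\<lparr>carrier := f (Suc i)\<rparr>"
    by blast
  then show "subnormal G H" unfolding subnormal_def
    by (intro exI[of _ "map f [0..<Suc n]"]) (simp add: hd_map last_map del: upt_Suc)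
qed

lemma (in group) pow_card_rcosets_mem_of_normal_in:
  assumes K: "subgroup K G" and HK: "H \<lhd> G\<lparr>carrier := K\<rparr>" and fH: "finite (rcosets H)"
    and powK: "\<forall>x\<in>carrier G. x [^] card (rcosets K) \<in> K"
  shows "\<forall>x\<in>carrier G. x [^] card (rcosets H) \<in> H"
proof
  interpret N: normal H "G\<lparr>carrier := K\<rparr>" by (rule HK)
  have H: "subgroup H G" using incl_subgroup[OF K N.is_subgroup] .
  have "H \<subseteq> K" using N.subset by simp
  let ?m = "card (rcosets\<^bsub>G\<lparr>carrier := K\<rparr>\<^esub> H)"
  have tower: "card (rcosets H) = card (rcosets K) * ?m"
    using card_rcosets_tower[OF H K \<open>H \<subseteq> K\<close> fH] .
  fix x assume x: "x \<in> carrier G"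
  have "x [^] card (rcosets K) \<in> K" using powK x by blast
  then have "(x [^] card (rcosets K)) [^] ?m \<in> H"
    using N.pow_card_rcosets_mem unfolding nat_pow_consistent[symmetric] by simp
  then show "x [^] card (rcosets H) \<in> H" using x tower by (simp add: nat_pow_pow)
qed

lemma (in group) exponential_if_subnormal:
  assumes sn: "subnormal G H" and fi: "finite_index G H"
  shows "exponential G H"
proof -
  obtain f :: "nat \<Rightarrow> 'a set" and n where f: "f 0 = H" "f n = carrier G"
    and normal_step: "\<And>i. i < n \<Longrightarrow> f i \<lhd> G\<lparr>carrier := f (Suc i)\<rparr>"
    using sn unfolding subnormal_iff_chain by blast
  have H: "subgroup H G" and fH: "finite (rcosets H)" using fi by (auto simp: finite_index_def)
  have up: "f i \<subseteq> f (Suc i)" if "i < n" for i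
    using subgroup.subset[OF normal_imp_subgroup[OF normal_step[OF that]]] by simp
  have H_sub: "H \<subseteq> f i" if "i \<le> n" for i
    using that
  proof (induction i)
    case (Suc i) then show ?case using up[of i] by simp
  qed (simp add: f(1))
  have "subgroup (f i) G \<and> (\<forall>x\<in>carrier G. x [^] card (rcosets (f i)) \<in> f i)" if "i \<le> n" for i
    using that
  proof (induction rule: inc_induct)
    case base then show ?case using f(2) subgroup_self by simp
  next
    case (step i)
    have "subgroup (f i) G"
      using incl_subgroup[OF conjunct1[OF step.IH] normal_imp_subgroup[OF normal_step[OF \<open>i < n\<close>]]] .
    moreover have "finite (rcosets (f i))"
      using finite_rcosets_mono[OF H \<open>subgroup (f i) G\<close> H_sub fH] \<open>i < n\<close> by simp
    ultimately show ?case
      using pow_card_rcosets_mem_of_normal_in[OF _ normal_step] step.IH \<open>i < n\<close> by blast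
  qed
  then show ?thesis using fi f(1) unfolding exponential_def group_index_def by force
qed


section \<open>Nilpotent finite quotients make subgroups of finite index subnormal\<close>

definition rcosets_kernel :: "('a, 'b) monoid_scheme \<Rightarrow> 'a set \<Rightarrow> 'a set" where
  "rcosets_kernel G H = {x \<in> carrier G. \<forall>A\<in>rcosets\<^bsub>G\<^esub> H. A #>\<^bsub>G\<^esub> x = A}"

lemma (in group) rcos_mem_rcosets:
  assumes "H \<subseteq> carrier G" "A \<in> rcosets H" "g \<in> carrier G"
  shows "A #> g \<in> rcosets H"
  using assms by (auto simp: RCOSETS_def coset_mult_assoc)

lemma (in group) rcosets_kernel_normal:
  assumes H: "subgroup H G"
  shows "rcosets_kernel G H \<lhd> G"
proof -
  let ?K = "rcosets_kernel G H"
  have Hc: "H \<subseteq> carrier G" using H subgroup.subset by blast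
  have Ac: "A \<subseteq> carrier G" if "A \<in> rcosets H" for A
    using that subgroup.rcosets_carrier[OF H is_group] by blast
  have sK: "subgroup ?K G"
  proof
    show "x \<otimes> y \<in> ?K" if "x \<in> ?K" "y \<in> ?K" for x y
      using that Ac by (auto simp: rcosets_kernel_def coset_mult_assoc[symmetric])
    show "inv x \<in> ?K" if "x \<in> ?K" for x
    proof -
      have "A #> inv x = A" if "A \<in> rcosets H" for A
        using \<open>x \<in> ?K\<close> that Ac[OF that] coset_mult_assoc[of A x "inv x"]
        by (auto simp: rcosets_kernel_def)
      then show ?thesis using \<open>x \<in> ?K\<close> by (simp add: rcosets_kernel_def)
    qed
  qed (use Ac in \<open>auto simp: rcosets_kernel_def\<close>)
  show ?thesis
  proof (rule normal_invI[OF sK])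
    fix g x assume g: "g \<in> carrier G" and x: "x \<in> ?K"
    have xc: "x \<in> carrier G" using x by (simp add: rcosets_kernel_def)
    have "A #> (g \<otimes> x \<otimes> inv g) = A" if "A \<in> rcosets H" for A
    proof -
      have "A #> (g \<otimes> x \<otimes> inv g) = ((A #> g) #> x) #> inv g"
        using g xc Ac[OF that] by (simp add: coset_mult_assoc)
      also have "\<dots> = A"
        using x rcos_mem_rcosets[OF Hc that g] g Ac[OF that]
        by (simp add: rcosets_kernel_def coset_mult_assoc)
      finally show ?thesis .
    qed
    then show "g \<otimes> x \<otimes> inv g \<in> ?K" using g xc by (simp add: rcosets_kernel_def)
  qed
qed

lemma (in group) rcosets_kernel_subset:
  assumes H: "subgroup H G"
  shows "rcosets_kernel G H \<subseteq> H"
proof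
  fix x assume "x \<in> rcosets_kernel G H"
  then have "H #> x = H" "x \<in> carrier G"
    using subgroup.subgroup_in_rcosets[OF H is_group] by (auto simp: rcosets_kernel_def)
  then show "x \<in> H" using rcos_self[OF _ H] by metis
qed

text \<open>The action factors through the finite set of maps \<open>rcosets H \<rightarrow> rcosets H\<close>.\<close>
lemma (in group) finite_rcosets_rcosets_kernel:
  assumes H: "subgroup H G" and fH: "finite (rcosets H)"
  shows "finite (rcosets (rcosets_kernel G H))"
proof -
  let ?K = "rcosets_kernel G H"
  have Hc: "H \<subseteq> carrier G" using H subgroup.subset by blast
  define act where "act x = (\<lambda>A\<in>rcosets H. A #> x)" for x
  have "?K #> x = ?K #> y" if x: "x \<in> carrier G" and y: "y \<in> carrier G" and "act x = act y" for x y
  proof -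
    have "A #> x = A #> y" if "A \<in> rcosets H" for A
      using that \<open>act x = act y\<close> by (metis act_def restrict_apply')
    then have "x \<otimes> inv y \<in> ?K"
      using x y subgroup.rcosets_carrier[OF H is_group]
      by (auto simp: rcosets_kernel_def coset_mult_inv2)
    then show ?thesis
      using rcos_eq_iff[OF normal_imp_subgroup[OF rcosets_kernel_normal[OF H]] x y] by simp
  qed
  moreover have "act ` carrier G \<subseteq> rcosets H \<rightarrow>\<^sub>E rcosets H"
    using rcos_mem_rcosets[OF Hc] by (auto simp: act_def)
  then have "finite (act ` carrier G)" using fH by (meson finite_PiE finite_subset)
  ultimately show ?thesis
    unfolding rcosets_eq_image by (rule finite_image_factor_through[of "carrier G" act])
qed

lemma (in group) lower_central_normal: "lower_central G k \<lhd> G"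
proof (induction k)
  case 0 then show ?case using normal_invI[OF subgroup_self] by auto
next
  case (Suc k)
  interpret N: normal "lower_central G k" G by (rule Suc)
  have "commutators G (lower_central G k) (carrier G) \<subseteq> carrier G"
    by (auto simp: commutators_def)
  then show ?case unfolding lower_central.simps
  proof (rule normal_generateI)
    fix c g assume c: "c \<in> commutators G (lower_central G k) (carrier G)" and g: "g \<in> carrier G"
    then obtain h x where hx: "h \<in> lower_central G k" "x \<in> carrier G" "c = h \<otimes> x \<otimes> inv h \<otimes> inv x"
      by (auto simp: commutators_def)
    have hc: "h \<in> carrier G" using hx(1) N.subset by blast
    have "g \<otimes> c \<otimes> inv g =
        (g \<otimes> h \<otimes> inv g) \<otimes> (g \<otimes> x \<otimes> inv g) \<otimes> inv (g \<otimes> h \<otimes> inv g) \<otimes> inv (g \<otimes> x \<otimes> inv g)"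
      using g hc hx by (simp add: inv_mult_group m_assoc)
    moreover have "g \<otimes> h \<otimes> inv g \<in> lower_central G k" using N.inv_op_closed2 g hx(1) by simp
    ultimately show "g \<otimes> c \<otimes> inv g \<in> commutators G (lower_central G k) (carrier G)"
      using g hx(2) unfolding commutators_def by blast
  qed
qed

lemma (in group) lower_central_subset_carrier: "lower_central G k \<subseteq> carrier G"
  using normal_imp_subgroup[OF lower_central_normal] subgroup.subset by blast

lemma (in group) commutator_mem_lower_central:
  assumes "h \<in> lower_central G k" "g \<in> carrier G"
  shows "h \<otimes> g \<otimes> inv h \<otimes> inv g \<in> lower_central G (Suc k)"
  using assms by (auto simp: commutators_def intro!: generate.incl)

lemma (in group) lower_central_Suc_subset: "lower_central G (Suc k) \<subseteq> lower_central G k"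
proof -
  interpret N: normal "lower_central G k" G by (rule lower_central_normal)
  have "commutators G (lower_central G k) (carrier G) \<subseteq> lower_central G k"
  proof
    fix c assume "c \<in> commutators G (lower_central G k) (carrier G)"
    then obtain h g where hg: "h \<in> lower_central G k" "g \<in> carrier G" "c = h \<otimes> (g \<otimes> inv h \<otimes> inv g)"
      using lower_central_subset_carrier by (auto simp: commutators_def m_assoc)
    then show "c \<in> lower_central G k" using N.inv_op_closed2 by simp
  qed
  then show ?thesis using generate_subgroup_incl[OF _ N.is_subgroup] by simp
qed

lemma (in normal) lower_central_Mod:
  "x \<in> lower_central G k \<Longrightarrow> H #> x \<in> lower_central (G Mod H) k"
proof (induction k arbitrary: x)
  case 0 then show ?case using carrier_FactGroup[of G H] by auto
next
  case (Suc k)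
  interpret Q: group "G Mod H" by (rule factorgroup_is_group)
  interpret hom: group_hom G "G Mod H" "\<lambda>a. H #> a" by (rule group_hom_Mod)
  let ?L = "lower_central (G Mod H) (Suc k)"
  have L: "subgroup ?L (G Mod H)" using normal_imp_subgroup[OF Q.lower_central_normal] .
  have "commutators G (lower_central G k) (carrier G) \<subseteq> \<Union>?L"
  proof
    fix c assume "c \<in> commutators G (lower_central G k) (carrier G)"
    then obtain h g where hg: "h \<in> lower_central G k" "g \<in> carrier G" "c = h \<otimes> g \<otimes> inv h \<otimes> inv g"
      by (auto simp: commutators_def)
    have hc: "h \<in> carrier G" using hg lower_central_subset_carrier by auto
    have "H #> c = (H #> h) \<otimes>\<^bsub>G Mod H\<^esub> (H #> g) \<otimes>\<^bsub>G Mod H\<^esub>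
        inv\<^bsub>G Mod H\<^esub> (H #> h) \<otimes>\<^bsub>G Mod H\<^esub> inv\<^bsub>G Mod H\<^esub> (H #> g)"
      using hg hc by simp
    also have "\<dots> \<in> ?L"
      using Q.commutator_mem_lower_central[OF Suc.IH[OF hg(1)]] hg(2) carrier_FactGroup by blast
    finally show "c \<in> \<Union>?L" using hg hc factgroup_subgroup_union_char[OF L] by simp
  qed
  then have "lower_central G (Suc k) \<subseteq> \<Union>?L"
    using generate_subgroup_incl[OF _ factgroup_subgroup_union_subgroup[OF L]] by simp
  then show ?case
    using Suc.prems factgroup_subgroup_union_char[OF L] lower_central_subset_carrier by blast
qed

lemma (in group) subgroup_normal_set_mult:
  assumes "N \<lhd> G" "subgroup H G"
  shows "subgroup (N <#> H) G"
  using assms second_isomorphism_grp.normal_set_mult_subgroup[of N G H]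
  by (simp add: second_isomorphism_grp_def second_isomorphism_grp_axioms_def)

lemma (in group) set_mult_normal_if_central_factor:
  assumes H: "subgroup H G" and N: "N \<lhd> G" and M: "M \<lhd> G" and MN: "M \<subseteq> N"
    and comm: "\<And>n g. n \<in> N \<Longrightarrow> g \<in> carrier G \<Longrightarrow> n \<otimes> g \<otimes> inv n \<otimes> inv g \<in> M"
  shows "M <#> H \<lhd> G\<lparr>carrier := N <#> H\<rparr>"
proof -
  interpret N: normal N G by (rule N)
  interpret M: normal M G by (rule M)
  have sNH: "subgroup (N <#> H) G" using subgroup_normal_set_mult[OF N H] .
  have sMH: "subgroup (M <#> H) G" using subgroup_normal_set_mult[OF M H] .
  interpret NH: group "G\<lparr>carrier := N <#> H\<rparr>" using subgroup.subgroup_is_group[OF sNH is_group] .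
  have Hc: "H \<subseteq> carrier G" using H subgroup.subset by blast
  show ?thesis
  proof (rule NH.normal_invI)
    show "subgroup (M <#> H) (G\<lparr>carrier := N <#> H\<rparr>)"
      using subgroup_incl[OF sMH sNH mono_set_mult[OF MN subset_refl]] .
  next
    fix x b assume "x \<in> carrier (G\<lparr>carrier := N <#> H\<rparr>)" and "b \<in> M <#> H"
    then obtain n h m k where nh: "n \<in> N" "h \<in> H" "x = n \<otimes> h" and mk: "m \<in> M" "k \<in> H" "b = m \<otimes> k"
      unfolding set_mult_def by auto
    have c: "n \<in> carrier G" "h \<in> carrier G" "m \<in> carrier G" "k \<in> carrier G"
      using nh mk Hc by auto
    let ?k = "h \<otimes> k \<otimes> inv h"
    have k': "?k \<in> H" using H nh(2) mk(2) by (simp add: subgroup.m_closed subgroup.m_inv_closed)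
    have "n \<otimes> (h \<otimes> m \<otimes> inv h) \<otimes> inv n \<in> M" using M.inv_op_closed2 c mk(1) by simp
    moreover have "n \<otimes> ?k \<otimes> inv n \<otimes> inv ?k \<in> M" using comm nh(1) k' Hc by blast
    ultimately have "n \<otimes> (h \<otimes> m \<otimes> inv h) \<otimes> inv n \<otimes> (n \<otimes> ?k \<otimes> inv n \<otimes> inv ?k) \<in> M"
      by simp
    moreover have "x \<otimes> b \<otimes> inv x = n \<otimes> (h \<otimes> m \<otimes> inv h) \<otimes> inv n \<otimes> (n \<otimes> ?k \<otimes> inv n \<otimes> inv ?k) \<otimes> ?k"
      using nh mk c by (simp add: inv_mult_group m_assoc)
    moreover have "inv\<^bsub>G\<lparr>carrier := N <#> H\<rparr>\<^esub> x = inv x"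
      using m_inv_consistent[OF sNH] \<open>x \<in> carrier (G\<lparr>carrier := N <#> H\<rparr>)\<close> by simp
    ultimately show "x \<otimes>\<^bsub>G\<lparr>carrier := N <#> H\<rparr>\<^esub> b \<otimes>\<^bsub>G\<lparr>carrier := N <#> H\<rparr>\<^esub>
        inv\<^bsub>G\<lparr>carrier := N <#> H\<rparr>\<^esub> x \<in> M <#> H"
      using k' unfolding set_mult_def by auto
  qed
qed

lemma (in group) subnormal_if_lower_central_subset:
  assumes H: "subgroup H G" and sub: "lower_central G n \<subseteq> H"
  shows "subnormal G H"
  unfolding subnormal_iff_chain
proof (intro exI conjI allI impI)
  let ?f = "\<lambda>i. lower_central G (n - i) <#> H"
  have Hc: "H \<subseteq> carrier G" using H subgroup.subset by blast
  show "?f 0 = H"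
  proof
    show "?f 0 \<subseteq> H" using sub subgroup.m_closed[OF H] unfolding set_mult_def by auto
    show "H \<subseteq> ?f 0"
      using Hc normal_imp_subgroup[OF lower_central_normal, THEN subgroup.one_closed]
      unfolding set_mult_def by force
  qed
  show "?f n = carrier G"
    using commut_normal[OF H normal_invI[OF subgroup_self]] set_mult_carrier_idem[OF H] by simp
  fix i assume "i < n"
  then have "n - i = Suc (n - Suc i)" by simp
  then show "?f i \<lhd> G\<lparr>carrier := ?f (Suc i)\<rparr>"
    using set_mult_normal_if_central_factor[OF H lower_central_normal lower_central_normal
        lower_central_Suc_subset commutator_mem_lower_central] by simp
qed

lemma (in group) subnormal_if_finite_quotients_nilpotent:
  assumes nil: "\<And>N. N \<lhd> G \<Longrightarrow> finite (carrier (G Mod N)) \<Longrightarrow> nilpotent_group (G Mod N)"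
    and fi: "finite_index G H"
  shows "subnormal G H"
proof -
  have H: "subgroup H G" and fH: "finite (rcosets H)" using fi by (auto simp: finite_index_def)
  define K where "K = rcosets_kernel G H"
  have K: "K \<lhd> G" "K \<subseteq> H" "finite (rcosets K)" unfolding K_def
    using rcosets_kernel_normal[OF H] rcosets_kernel_subset[OF H] finite_rcosets_rcosets_kernel[OF H fH]
    by auto
  interpret K: normal K G by (rule K(1))
  have "nilpotent_group (G Mod K)" using nil K(1,3) by (simp add: FactGroup_def)
  then obtain n where n: "lower_central (G Mod K) n = {K}" unfolding nilpotent_group_def by auto
  have "lower_central G n \<subseteq> K"
  proof
    fix x assume x: "x \<in> lower_central G n"
    then have "K #> x = K" using K.lower_central_Mod n by auto
    then show "x \<in> K" using x lower_central_subset_carrier rcos_self[OF _ K.is_subgroup] by blast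
  qed
  then show ?thesis using subnormal_if_lower_central_subset H K(2) by blast
qed


section \<open>Finite groups whose subgroups are all exponential are nilpotent\<close>

lemma (in group) finite_index_if_finite:
  assumes "finite (carrier G)" "subgroup K G"
  shows "finite_index G K"
  using assms rcosets_subset_PowG unfolding finite_index_def by (meson finite_Pow_iff finite_subset)

lemma (in group) mem_if_pow_coprime_index:
  assumes exp: "exponential G K" and x: "x \<in> carrier G" and "x [^] n = \<one>"
    and cop: "coprime (card (rcosets K)) n"
  shows "x \<in> K"
proof -
  let ?m = "card (rcosets K)"
  have K: "subgroup K G" and "finite (rcosets K)" using exp by (auto simp: exponential_def finite_index_def)
  then have "?m \<noteq> 0" using subgroup.subgroup_in_rcosets[OF K is_group] by auto
  then obtain u v where "?m * u = n * v + 1" using bezout_nat[of ?m n] cop by auto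
  then have "(x [^] ?m) [^] u = (x [^] n) [^] v \<otimes> x"
    using x by (simp add: nat_pow_pow nat_pow_mult[symmetric])
  then have "x = (x [^] ?m) [^] u" using x \<open>x [^] n = \<one>\<close> by simp
  moreover have "x [^] ?m \<in> K" using exp x by (simp add: exponential_def group_index_def)
  ultimately show ?thesis using K by (metis group.subgroup_int_pow_closed[OF is_group] int_pow_int)
qed

lemma (in group) conj_nat_pow:
  assumes "g \<in> carrier G" "h \<in> carrier G"
  shows "(g \<otimes> h \<otimes> inv g) [^] (n::nat) = g \<otimes> h [^] n \<otimes> inv g"
  using assms by (induction n) (simp_all add: m_assoc)

text \<open>A Sylow subgroup has index prime to \<open>p\<close>, so it contains every element whose order divides
  the \<open>p\<close>-part of \<open>|G|\<close>.\<close>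
lemma (in group) normal_sylow_if_all_exponential:
  assumes fin: "finite (carrier G)" and exp: "\<And>K. finite_index G K \<Longrightarrow> exponential G K"
    and p: "Factorial_Ring.prime (p::nat)"
  defines "P \<equiv> {x \<in> carrier G. x [^] (p ^ multiplicity p (order G)) = \<one>}"
  shows "P \<lhd> G" and "card P = p ^ multiplicity p (order G)"
proof -
  let ?q = "p ^ multiplicity p (order G)"
  let ?m = "order G div ?q"
  have ord: "order G = ?q * ?m" using multiplicity_dvd[of p "order G"] by simp
  have "order G \<noteq> 0" using fin order_gt_0_iff_finite by auto
  then have nd: "\<not> p dvd ?m" using multiplicity_decompose[of "order G" p] p not_prime_unit by blast
  obtain S where S: "subgroup S G" "card S = ?q" using sylow_thm[OF p is_group ord fin] by blast
  have "card (rcosets S) * ?q = ?q * ?m" using lagrange[OF S(1)] S(2) ord by simp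
  then have "card (rcosets S) = ?m" using p by (simp add: prime_gt_0_nat)
  then have cop: "coprime (card (rcosets S)) ?q"
    using nd p by (simp add: prime_imp_coprime coprime_commute[of _ p])
  have "P = S"
  proof
    show "P \<subseteq> S"
      using mem_if_pow_coprime_index[OF exp[OF finite_index_if_finite[OF fin S(1)]] _ _ cop]
      by (auto simp: P_def)
    show "S \<subseteq> P"
    proof
      fix x assume x: "x \<in> S"
      interpret S: group "G\<lparr>carrier := S\<rparr>" using subgroup.subgroup_is_group[OF S(1) is_group] .
      have "x [^]\<^bsub>G\<lparr>carrier := S\<rparr>\<^esub> order (G\<lparr>carrier := S\<rparr>) = \<one>"
        using S.pow_order_eq_1 x by simp
      then show "x \<in> P"
        using subgroup.mem_carrier[OF S(1) x] S(2) by (simp add: P_def order_def nat_pow_consistent[symmetric])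
    qed
  qed
  then show "card P = ?q" using S(2) by simp
  show "P \<lhd> G"
  proof (rule normal_invI)
    show "subgroup P G" using \<open>P = S\<close> S(1) by simp
    show "g \<otimes> h \<otimes> inv g \<in> P" if "g \<in> carrier G" "h \<in> P" for g h
      using that by (simp add: P_def conj_nat_pow)
  qed
qed

lemma (in group) commute_if_normal_Int_trivial:
  assumes P: "P \<lhd> G" and S: "S \<lhd> G" and triv: "P \<inter> S \<subseteq> {\<one>}"
    and x: "x \<in> P" and y: "y \<in> S"
  shows "x \<otimes> y = y \<otimes> x"
proof -
  interpret P: normal P G by (rule P)
  interpret S: normal S G by (rule S)
  have xc: "x \<in> carrier G" and yc: "y \<in> carrier G" using x y P.subset S.subset by auto
  have "x \<otimes> (y \<otimes> inv x \<otimes> inv y) \<in> P" using x yc P.inv_op_closed2 by simp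
  moreover have "x \<otimes> y \<otimes> inv x \<otimes> inv y \<in> S" using xc y S.inv_op_closed2 by simp
  ultimately have "x \<otimes> y \<otimes> inv x \<otimes> inv y = \<one>" using triv xc yc by (auto simp: m_assoc)
  then have "x \<otimes> y \<otimes> inv x \<otimes> inv y \<otimes> (y \<otimes> x) = y \<otimes> x" using xc yc by simp
  then show ?thesis using xc yc by (simp add: m_assoc)
qed

lemma (in group) card_subgroup_dvd_card:
  assumes "subgroup S G" "subgroup T G" "S \<subseteq> T"
  shows "card S dvd card T"
proof -
  interpret T: group "G\<lparr>carrier := T\<rparr>" using subgroup.subgroup_is_group[OF assms(2) is_group] .
  have "card (rcosets\<^bsub>G\<lparr>carrier := T\<rparr>\<^esub> S) * card S = card T"
    using T.lagrange subgroup_incl[OF assms] by (simp add: order_def)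
  then show ?thesis by (metis dvd_triv_right)
qed

lemma (in group) eq_one_if_coprime_pows:
  assumes "x \<in> carrier G" "x [^] (a::nat) = \<one>" "x [^] (b::nat) = \<one>" "coprime a b"
  shows "x = \<one>"
proof -
  have "ord x dvd a" "ord x dvd b" using assms pow_eq_id by auto
  then have "ord x = 1" using assms(4) coprime_common_divisor_nat by blast
  then show ?thesis using ord_eq_1 assms(1) by blast
qed

lemma (in group) sylow_elements_commute_if_all_exponential:
  assumes fin: "finite (carrier G)" and exp: "\<And>K. finite_index G K \<Longrightarrow> exponential G K"
    and p: "Factorial_Ring.prime (p::nat)" and q: "Factorial_Ring.prime q" and "p \<noteq> q"
    and x: "x \<in> carrier G" "x [^] (p ^ multiplicity p (order G)) = \<one>"
    and y: "y \<in> carrier G" "y [^] (q ^ multiplicity q (order G)) = \<one>"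
  shows "x \<otimes> y = y \<otimes> x"
proof (rule commute_if_normal_Int_trivial)
  show "{x \<in> carrier G. x [^] (p ^ multiplicity p (order G)) = \<one>} \<lhd> G"
    "{x \<in> carrier G. x [^] (q ^ multiplicity q (order G)) = \<one>} \<lhd> G"
    using normal_sylow_if_all_exponential(1)[OF fin exp] p q by blast+
  have "coprime (p ^ multiplicity p (order G)) (q ^ multiplicity q (order G))"
    using primes_coprime[OF p q \<open>p \<noteq> q\<close>] by simp
  then show "{x \<in> carrier G. x [^] (p ^ multiplicity p (order G)) = \<one>} \<inter>
      {x \<in> carrier G. x [^] (q ^ multiplicity q (order G)) = \<one>} \<subseteq> {\<one>}"
    using eq_one_if_coprime_pows by blast
qed (use x y in auto)

definition conj_action :: "('a, 'b) monoid_scheme \<Rightarrow> 'a \<Rightarrow> 'a \<Rightarrow> 'a" where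
  "conj_action G g = (\<lambda>h\<in>carrier G. g \<otimes>\<^bsub>G\<^esub> h \<otimes>\<^bsub>G\<^esub> inv\<^bsub>G\<^esub> g)"

lemma (in group) group_action_conj: "group_action G (carrier G) (conj_action G)"
  unfolding conj_action_def by (rule action_by_conjugation)

lemma (in group) orbit_conj_action:
  "x \<in> carrier G \<Longrightarrow> orbit G (conj_action G) x = {g \<otimes> x \<otimes> inv g | g. g \<in> carrier G}"
  by (auto simp: orbit_def conj_action_def)

lemma (in group) stabilizer_conj_action:
  "x \<in> carrier G \<Longrightarrow> stabilizer G (conj_action G) x = {g \<in> carrier G. g \<otimes> x \<otimes> inv g = x}"
  by (auto simp: stabilizer_def conj_action_def)

text \<open>The stabiliser of an element of the normal Sylow \<open>p\<close>-subgroup contains every other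
  normal Sylow subgroup, so its index is prime to every prime \<open>q \<noteq> p\<close>.\<close>
lemma (in group) card_conj_orbit_dvd_sylow_order:
  assumes fin: "finite (carrier G)" and exp: "\<And>K. finite_index G K \<Longrightarrow> exponential G K"
    and p: "Factorial_Ring.prime (p::nat)" and x: "x \<in> carrier G" "x [^] (p ^ multiplicity p (order G)) = \<one>"
  shows "card (orbit G (conj_action G) x) dvd p ^ multiplicity p (order G)"
proof -
  interpret A: group_action G "carrier G" "conj_action G" by (rule group_action_conj)
  let ?q = "p ^ multiplicity p (order G)" and ?m = "order G div p ^ multiplicity p (order G)"
  let ?o = "card (orbit G (conj_action G) x)" and ?st = "stabilizer G (conj_action G) x"
  have o0: "order G \<noteq> 0" using fin order_gt_0_iff_finite by auto
  have ost: "?o * card ?st = order G" using A.orbit_stabilizer_theorem[OF x(1)] .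
  have "coprime ?o ?m"
  proof (rule ccontr)
    assume "\<not> coprime ?o ?m"
    then obtain q where q: "Factorial_Ring.prime q" "q dvd ?o" "q dvd ?m"
      using prime_factor_nat[of "gcd ?o ?m"] by (auto simp: coprime_iff_gcd_eq_1)
    then have "q \<noteq> p" using multiplicity_decompose[of "order G" p] o0 p not_prime_unit by blast
    let ?r = "q ^ multiplicity q (order G)"
    define S where "S = {y \<in> carrier G. y [^] ?r = \<one>}"
    have S: "S \<lhd> G" "card S = ?r"
      using normal_sylow_if_all_exponential[OF fin exp q(1)] by (simp_all add: S_def)
    have "S \<subseteq> ?st"
    proof
      fix y assume y: "y \<in> S"
      then have yc: "y \<in> carrier G" by (simp add: S_def)
      have "x \<otimes> y = y \<otimes> x"
        using sylow_elements_commute_if_all_exponential[OF fin exp p q(1) \<open>q \<noteq> p\<close>[symmetric] x] y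
        by (simp add: S_def)
      then have "y \<otimes> x \<otimes> inv y = x" using x(1) yc by (metis inv_closed m_assoc r_inv r_one)
      then show "y \<in> ?st" using x(1) yc stabilizer_conj_action by simp
    qed
    then have "?r dvd card ?st"
      using S(2) card_subgroup_dvd_card[OF normal_imp_subgroup[OF S(1)] A.stabilizer_subgroup[OF x(1)]]
      by simp
    then have "q * ?r dvd ?o * card ?st" using q(2) by (rule mult_dvd_mono[rotated])
    then have "q ^ Suc (multiplicity q (order G)) dvd order G" using ost by simp
    moreover have "\<not> is_unit q" using q(1) not_prime_unit by blast
    ultimately have "Suc (multiplicity q (order G)) \<le> multiplicity q (order G)"
      using multiplicity_geI[OF o0] by blast
    then show False by simp
  qed
  moreover have "order G = ?q * ?m" using multiplicity_dvd[of p "order G"] by simp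
  then have "?o dvd ?q * ?m" using ost by (metis dvd_triv_left)
  ultimately show ?thesis using coprime_dvd_mult_left_iff by blast
qed

lemma (in group_action) orbit_eq_if_mem:
  assumes "x \<in> E" "y \<in> orbit G \<phi> x"
  shows "orbit G \<phi> y = orbit G \<phi> x"
proof -
  have "y \<in> E" using assms element_image by (auto simp: orbit_def)
  then have "orbit G \<phi> y \<in> orbits G E \<phi>" "orbit G \<phi> x \<in> orbits G E \<phi>"
    using assms(1) by (auto simp: orbits_def)
  moreover have "y \<in> orbit G \<phi> y \<inter> orbit G \<phi> x" using assms orbit_refl \<open>y \<in> E\<close> by blast
  ultimately show ?thesis using disjoint_union by blast
qed

text \<open>The non-fixed points of \<open>P\<close> are partitioned by orbits whose sizes are positive powers of \<open>p\<close>.\<close>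
lemma (in group_action) prime_dvd_card_fixed_points:
  assumes fin: "finite P" and PE: "P \<subseteq> E" and inv: "\<And>x. x \<in> P \<Longrightarrow> orbit G \<phi> x \<subseteq> P"
    and ppow: "\<And>x. x \<in> P \<Longrightarrow> \<exists>i. card (orbit G \<phi> x) = p ^ i"
    and dvd: "(p::nat) dvd card P"
  shows "p dvd card {x \<in> P. orbit G \<phi> x = {x}}"
proof -
  define F where "F = {x \<in> P. orbit G \<phi> x = {x}}"
  define D where "D = P - F"
  have self: "x \<in> orbit G \<phi> x" if "x \<in> P" for x using orbit_refl PE that by blast
  have orbit_D: "orbit G \<phi> x \<subseteq> D" if "x \<in> D" for x
  proof
    fix y assume y: "y \<in> orbit G \<phi> x"
    have x: "x \<in> P" "x \<notin> F" using that by (auto simp: D_def)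
    have "orbit G \<phi> y = orbit G \<phi> x" using orbit_eq_if_mem PE x(1) y by blast
    then have "y \<notin> F" using x self[OF x(1)] by (auto simp: F_def)
    then show "y \<in> D" using inv[OF x(1)] y by (auto simp: D_def)
  qed
  have "D = \<Union>(orbit G \<phi> ` D)" using orbit_D self by (auto simp: D_def)
  moreover have "p dvd card (\<Union>(orbit G \<phi> ` D))"
  proof (rule dvd_partition)
    show "finite (\<Union>(orbit G \<phi> ` D))" using fin orbit_D by (auto simp: D_def intro: finite_subset)
    show "\<forall>c\<in>orbit G \<phi> ` D. p dvd card c"
    proof
      fix c assume "c \<in> orbit G \<phi> ` D"
      then obtain x where x: "x \<in> P" "x \<notin> F" "c = orbit G \<phi> x" by (auto simp: D_def)
      obtain i where i: "card c = p ^ i" using ppow x by blast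
      have "i \<noteq> 0"
      proof
        assume "i = 0"
        then obtain w where "c = {w}" using i card_1_singletonE by auto
        then show False using x self[OF x(1)] by (auto simp: F_def)
      qed
      then show "p dvd card c" using i by simp
    qed
    show "\<forall>c1\<in>orbit G \<phi> ` D. \<forall>c2\<in>orbit G \<phi> ` D. c1 \<noteq> c2 \<longrightarrow> c1 \<inter> c2 = {}"
      using disjoint_union PE by (auto simp: D_def orbits_def)
  qed
  ultimately have "p dvd card D" by simp
  moreover have "card P = card F + card D"
  proof -
    have "F \<subseteq> P" "finite F" using fin by (auto simp: F_def intro: finite_subset)
    then show ?thesis using fin by (simp add: D_def card_Diff_subset card_mono)
  qed
  ultimately show ?thesis using dvd unfolding F_def by (simp add: dvd_add_left_iff)
qed

lemma (in group) prime_dvd_card_conj_fixed_sylow_if_all_exponential: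
  assumes fin: "finite (carrier G)" and exp: "\<And>K. finite_index G K \<Longrightarrow> exponential G K"
    and p: "Factorial_Ring.prime p" "p dvd order G"
  defines "P \<equiv> {x \<in> carrier G. x [^] (p ^ multiplicity p (order G)) = \<one>}"
  shows "p dvd card {x \<in> P. orbit G (conj_action G) x = {x}}"
proof (rule group_action.prime_dvd_card_fixed_points[OF group_action_conj])
  have P: "P \<lhd> G" "card P = p ^ multiplicity p (order G)"
    using normal_sylow_if_all_exponential[OF fin exp p(1)] by (simp_all add: P_def)
  show "finite P" "P \<subseteq> carrier G" using fin by (auto simp: P_def intro: finite_subset)
  show "orbit G (conj_action G) x \<subseteq> P" if "x \<in> P" for x
  proof -
    have "x \<in> carrier G" using that by (simp add: P_def)
    then show ?thesis using orbit_conj_action normal_invE(2)[OF P(1) _ that] by auto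
  qed
  show "\<exists>i. card (orbit G (conj_action G) x) = p ^ i" if "x \<in> P" for x
  proof -
    have "card (orbit G (conj_action G) x) dvd p ^ multiplicity p (order G)"
      using card_conj_orbit_dvd_sylow_order[OF fin exp p(1)] that by (simp add: P_def)
    then show ?thesis using divides_primepow_nat[OF p(1)] by blast
  qed
  have "0 < order G" using fin order_gt_0_iff_finite by blast
  then show "p dvd card P"
    using P(2) p prime_gt_1_nat[OF p(1)] multiplicity_gt_zero_iff[where p=p and x="order G"] by simp
qed

text \<open>The identity is one of the fixed points counted above, so there are at least \<open>p\<close> of them.\<close>
lemma (in group) exists_central_if_all_exponential:
  assumes fin: "finite (carrier G)" and exp: "\<And>K. finite_index G K \<Longrightarrow> exponential G K"
    and nontriv: "carrier G \<noteq> {\<one>}"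
  shows "\<exists>z\<in>carrier G. z \<noteq> \<one> \<and> (\<forall>g\<in>carrier G. z \<otimes> g = g \<otimes> z)"
proof -
  have "order G \<noteq> 1" using nontriv order_one_triv_iff by blast
  then obtain p where p: "Factorial_Ring.prime p" "p dvd order G" using prime_factor_nat by blast
  define F where "F = {x \<in> carrier G. x [^] (p ^ multiplicity p (order G)) = \<one> \<and>
                               orbit G (conj_action G) x = {x}}"
  have p_dvd: "p dvd card F"
    using prime_dvd_card_conj_fixed_sylow_if_all_exponential[OF fin exp p] unfolding F_def
    by simp
  have "orbit G (conj_action G) \<one> \<subseteq> {\<one>}" using orbit_conj_action[OF one_closed] by auto
  then have "orbit G (conj_action G) \<one> = {\<one>}"
    using group_action.orbit_refl[OF group_action_conj one_closed] by blast
  then have "\<one> \<in> F" by (simp add: F_def)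
  moreover have "finite F" using fin unfolding F_def by (rule finite_subset[rotated]) blast
  ultimately have "0 < card F" using card_gt_0_iff by blast
  then have "p \<le> card F" using p_dvd by (simp add: dvd_imp_le)
  then have "\<not> F \<subseteq> {\<one>}" using prime_ge_2_nat[OF p(1)] card_mono[of "{\<one>}" F] by auto
  then obtain z where z: "z \<in> carrier G" "orbit G (conj_action G) z = {z}" "z \<noteq> \<one>"
    unfolding F_def by blast
  have "z \<otimes> g = g \<otimes> z" if g: "g \<in> carrier G" for g
  proof -
    have "g \<otimes> z \<otimes> inv g = z" using z(2) orbit_conj_action[OF z(1)] g by blast
    moreover have "g \<otimes> z = (g \<otimes> z \<otimes> inv g) \<otimes> g" using g z(1) by (simp add: m_assoc)
    ultimately show ?thesis by simp
  qed
  then show ?thesis using z(1,3) by blast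
qed

lemma (in normal) rcos_Union_eq_iff:
  assumes Kb: "subgroup Kb (G Mod H)" and x: "x \<in> carrier G" and y: "y \<in> carrier G"
  shows "\<Union>Kb #> x = \<Union>Kb #> y \<longleftrightarrow> Kb #>\<^bsub>G Mod H\<^esub> (H #> x) = Kb #>\<^bsub>G Mod H\<^esub> (H #> y)"
proof -
  interpret Q: group "G Mod H" by (rule factorgroup_is_group)
  interpret hom: group_hom G "G Mod H" "\<lambda>a. H #> a" by (rule group_hom_Mod)
  have "\<Union>Kb #> x = \<Union>Kb #> y \<longleftrightarrow> H #> (x \<otimes> inv y) \<in> Kb"
    using rcos_eq_iff[OF factgroup_subgroup_union_subgroup[OF Kb] x y]
      factgroup_subgroup_union_char[OF Kb] x y by auto
  also have "\<dots> \<longleftrightarrow> (H #> x) \<otimes>\<^bsub>G Mod H\<^esub> inv\<^bsub>G Mod H\<^esub> (H #> y) \<in> Kb"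
    using x y by simp
  also have "\<dots> \<longleftrightarrow> Kb #>\<^bsub>G Mod H\<^esub> (H #> x) = Kb #>\<^bsub>G Mod H\<^esub> (H #> y)"
    using Q.rcos_eq_iff[OF Kb] x y carrier_FactGroup by blast
  finally show ?thesis .
qed

lemma (in normal) index_Union_Mod:
  assumes "finite_index (G Mod H) Kb"
  shows "finite_index G (\<Union>Kb)" and "group_index G (\<Union>Kb) = group_index (G Mod H) Kb"
proof -
  interpret Q: group "G Mod H" by (rule factorgroup_is_group)
  have Kb: "subgroup Kb (G Mod H)" and fin_Kb: "finite (rcosets\<^bsub>G Mod H\<^esub> Kb)"
    using assms unfolding finite_index_def by blast+
  have rcosets_Kb: "rcosets\<^bsub>G Mod H\<^esub> Kb = (\<lambda>x. Kb #>\<^bsub>G Mod H\<^esub> (H #> x)) ` carrier G"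
    by (simp only: Q.rcosets_eq_image carrier_FactGroup image_image)
  have "finite (rcosets (\<Union>Kb))" unfolding rcosets_eq_image
    by (rule finite_image_factor_through[OF _ fin_Kb[unfolded rcosets_Kb]])
      (simp add: rcos_Union_eq_iff[OF Kb])
  then show "finite_index G (\<Union>Kb)"
    using factgroup_subgroup_union_subgroup[OF Kb] by (simp add: finite_index_def)
  show "group_index G (\<Union>Kb) = group_index (G Mod H) Kb"
    unfolding group_index_def rcosets_eq_image rcosets_Kb
    using rcos_Union_eq_iff[OF Kb] by (rule card_image_eq_if_same_fibres)
qed

lemma (in normal) exponential_Mod:
  assumes exp: "\<And>K. finite_index G K \<Longrightarrow> exponential G K"
    and fi: "finite_index (G Mod H) Kb"
  shows "exponential (G Mod H) Kb"
proof -
  have Kb: "subgroup Kb (G Mod H)" using fi by (simp add: finite_index_def)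
  have exp_K: "exponential G (\<Union>Kb)" using exp index_Union_Mod(1)[OF fi] .
  have "Y [^]\<^bsub>G Mod H\<^esub> group_index (G Mod H) Kb \<in> Kb" if "Y \<in> carrier (G Mod H)" for Y
  proof -
    from that obtain x where x: "x \<in> carrier G" "Y = H #> x" by (auto simp: FactGroup_def RCOSETS_def)
    have "x [^] group_index G (\<Union>Kb) \<in> \<Union>Kb"
      using exp_K x(1) unfolding exponential_def by blast
    then have "H #> (x [^] group_index G (\<Union>Kb)) \<in> Kb"
      using factgroup_subgroup_union_char[OF Kb] by blast
    then show ?thesis unfolding x(2) index_Union_Mod(2)[OF fi, symmetric] FactGroup_pow[OF x(1)] .
  qed
  then show ?thesis using fi by (simp add: exponential_def)
qed

definition central_preimage :: "('a, 'b) monoid_scheme \<Rightarrow> 'a set \<Rightarrow> 'a set" where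
  "central_preimage G H =
     {x \<in> carrier G. \<forall>g\<in>carrier G. x \<otimes>\<^bsub>G\<^esub> g \<otimes>\<^bsub>G\<^esub> inv\<^bsub>G\<^esub> x \<otimes>\<^bsub>G\<^esub> inv\<^bsub>G\<^esub> g \<in> H}"

lemma (in normal) central_preimage_subgroup: "subgroup (central_preimage G H) G"
proof
  have comm: "x \<otimes> g \<otimes> inv x \<otimes> inv g \<in> H" if "x \<in> central_preimage G H" "g \<in> carrier G" for x g
    using that by (simp add: central_preimage_def)
  show "central_preimage G H \<subseteq> carrier G" by (auto simp: central_preimage_def)
  show "\<one> \<in> central_preimage G H" by (simp add: central_preimage_def)
next
  fix x y assume x: "x \<in> central_preimage G H" and y: "y \<in> central_preimage G H"
  have c: "x \<in> carrier G" "y \<in> carrier G" using x y by (auto simp: central_preimage_def)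
  have "x \<otimes> y \<otimes> g \<otimes> inv (x \<otimes> y) \<otimes> inv g \<in> H" if g: "g \<in> carrier G" for g
  proof -
    have "x \<otimes> y \<otimes> g \<otimes> inv (x \<otimes> y) \<otimes> inv g =
        x \<otimes> (y \<otimes> g \<otimes> inv y \<otimes> inv g) \<otimes> inv x \<otimes> (x \<otimes> g \<otimes> inv x \<otimes> inv g)"
      using c g by (simp add: m_assoc inv_mult_group)
    then show ?thesis using inv_op_closed2 x y c g by (simp add: central_preimage_def)
  qed
  then show "x \<otimes> y \<in> central_preimage G H" using c by (simp add: central_preimage_def)
next
  fix x assume x: "x \<in> central_preimage G H"
  have c: "x \<in> carrier G" using x by (simp add: central_preimage_def)
  have "inv x \<otimes> g \<otimes> inv (inv x) \<otimes> inv g \<in> H" if g: "g \<in> carrier G" for g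
  proof -
    have "x \<otimes> g \<otimes> inv x \<otimes> inv g \<in> H" using x g by (simp add: central_preimage_def)
    moreover have "inv x \<otimes> g \<otimes> inv (inv x) \<otimes> inv g =
        inv x \<otimes> inv (x \<otimes> g \<otimes> inv x \<otimes> inv g) \<otimes> inv (inv x)"
      using c g by (simp add: m_assoc inv_mult_group)
    ultimately show ?thesis using inv_op_closed2[OF inv_closed[OF c] m_inv_closed] c by simp
  qed
  then show "inv x \<in> central_preimage G H" using c by (simp add: central_preimage_def)
qed

lemma (in normal) central_preimage_normal: "central_preimage G H \<lhd> G"
proof (rule normal_invI[OF central_preimage_subgroup])
  fix a x assume a: "a \<in> carrier G" and x: "x \<in> central_preimage G H"
  have c: "x \<in> carrier G" using x by (simp add: central_preimage_def)
  have "a \<otimes> x \<otimes> inv a \<otimes> g \<otimes> inv (a \<otimes> x \<otimes> inv a) \<otimes> inv g \<in> H" if g: "g \<in> carrier G" for g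
  proof -
    have "x \<otimes> (inv a \<otimes> g \<otimes> a) \<otimes> inv x \<otimes> inv (inv a \<otimes> g \<otimes> a) \<in> H"
      using x a g by (simp add: central_preimage_def)
    moreover have "a \<otimes> x \<otimes> inv a \<otimes> g \<otimes> inv (a \<otimes> x \<otimes> inv a) \<otimes> inv g =
        a \<otimes> (x \<otimes> (inv a \<otimes> g \<otimes> a) \<otimes> inv x \<otimes> inv (inv a \<otimes> g \<otimes> a)) \<otimes> inv a"
      using a c g by (simp add: m_assoc inv_mult_group)
    ultimately show ?thesis using inv_op_closed2 a by simp
  qed
  then show "a \<otimes> x \<otimes> inv a \<in> central_preimage G H" using a c by (simp add: central_preimage_def)
qed

lemma (in normal) subset_central_preimage: "H \<subseteq> central_preimage G H"
proof
  fix h assume h: "h \<in> H"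
  have "h \<otimes> g \<otimes> inv h \<otimes> inv g \<in> H" if g: "g \<in> carrier G" for g
  proof -
    have "g \<otimes> inv h \<otimes> inv g \<in> H" using inv_op_closed2 g h by simp
    then show ?thesis using h g by (simp add: m_assoc)
  qed
  then show "h \<in> central_preimage G H" using h by (simp add: central_preimage_def)
qed

lemma (in normal) central_preimage_grows_if_all_exponential:
  assumes fin: "finite (carrier G)" and exp: "\<And>K. finite_index G K \<Longrightarrow> exponential G K"
    and ne: "H \<noteq> carrier G"
  shows "H \<subset> central_preimage G H"
proof -
  interpret Q: group "G Mod H" by (rule factorgroup_is_group)
  interpret hom: group_hom G "G Mod H" "\<lambda>a. H #> a" by (rule group_hom_Mod)
  have finQ: "finite (carrier (G Mod H))"
    using fin rcosets_subset_PowG[OF is_subgroup] by (simp add: FactGroup_def finite_subset)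
  obtain y where y: "y \<in> carrier G" "y \<notin> H" using ne subset by auto
  then have "H #> y \<noteq> H" "H #> y \<in> carrier (G Mod H)"
    using rcos_self[OF y(1) is_subgroup] carrier_FactGroup by auto
  then have "carrier (G Mod H) \<noteq> {\<one>\<^bsub>G Mod H\<^esub>}" by auto
  then obtain Z where Z: "Z \<in> carrier (G Mod H)" "Z \<noteq> H"
      "\<And>W. W \<in> carrier (G Mod H) \<Longrightarrow> Z \<otimes>\<^bsub>G Mod H\<^esub> W = W \<otimes>\<^bsub>G Mod H\<^esub> Z"
    using Q.exists_central_if_all_exponential[OF finQ exponential_Mod[OF exp]] by auto
  obtain x where x: "x \<in> carrier G" "Z = H #> x" using Z(1) unfolding carrier_FactGroup by blast
  have "x \<notin> H" using Z(2) x rcos_const by auto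
  moreover have "x \<otimes> g \<otimes> inv x \<otimes> inv g \<in> H" if g: "g \<in> carrier G" for g
  proof -
    have Hg: "H #> g \<in> carrier (G Mod H)" using g carrier_FactGroup by auto
    have "H #> (x \<otimes> g \<otimes> inv x \<otimes> inv g) =
        Z \<otimes>\<^bsub>G Mod H\<^esub> (H #> g) \<otimes>\<^bsub>G Mod H\<^esub> inv\<^bsub>G Mod H\<^esub> Z \<otimes>\<^bsub>G Mod H\<^esub> inv\<^bsub>G Mod H\<^esub> (H #> g)"
      using x g by simp
    also have "\<dots> = (H #> g) \<otimes>\<^bsub>G Mod H\<^esub> Z \<otimes>\<^bsub>G Mod H\<^esub> inv\<^bsub>G Mod H\<^esub> Z \<otimes>\<^bsub>G Mod H\<^esub> inv\<^bsub>G Mod H\<^esub> (H #> g)"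
      using Z(3)[OF Hg] by simp
    also have "\<dots> = \<one>\<^bsub>G Mod H\<^esub>"
      using Z(1) Hg by (simp add: Q.m_assoc del: mult_FactGroup one_FactGroup)
    also have "\<dots> = H" by simp
    finally have "H #> (x \<otimes> g \<otimes> inv x \<otimes> inv g) = H" .
    then show ?thesis using rcos_self[OF _ is_subgroup, of "x \<otimes> g \<otimes> inv x \<otimes> inv g"] x g by simp
  qed
  ultimately show ?thesis using subset_central_preimage x(1) by (auto simp: central_preimage_def)
qed

text \<open>Climbing the upper central series: by induction on the index of \<open>N\<close>, using
  \<open>[central_preimage G N, G] \<subseteq> N\<close>.\<close>
lemma (in group) lower_central_subset_if_all_exponential:
  assumes fin: "finite (carrier G)" and exp: "\<And>K. finite_index G K \<Longrightarrow> exponential G K"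
    and "N \<lhd> G"
  shows "\<exists>n. lower_central G n \<subseteq> N"
  using \<open>N \<lhd> G\<close>
proof (induction "card (carrier G - N)" arbitrary: N rule: less_induct)
  case less
  interpret N: normal N G by (rule less.prems)
  show ?case
  proof (cases "N = carrier G")
    case True
    then show ?thesis by (metis lower_central.simps(1) order_refl)
  next
    case False
    let ?Z = "central_preimage G N"
    have "N \<subset> ?Z" using N.central_preimage_grows_if_all_exponential[OF fin exp False] .
    moreover have "?Z \<subseteq> carrier G" by (auto simp: central_preimage_def)
    ultimately have "card (carrier G - ?Z) < card (carrier G - N)"
      using fin by (intro psubset_card_mono) auto
    then obtain n where n: "lower_central G n \<subseteq> ?Z"
      using less.hyps N.central_preimage_normal by blast
    have "commutators G (lower_central G n) (carrier G) \<subseteq> N"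
      using n by (auto simp: commutators_def central_preimage_def)
    then have "lower_central G (Suc n) \<subseteq> N"
      using generate_subgroup_incl[OF _ N.is_subgroup] by simp
    then show ?thesis by blast
  qed
qed

lemma (in group) nilpotent_if_all_exponential:
  assumes fin: "finite (carrier G)" and exp: "\<And>K. finite_index G K \<Longrightarrow> exponential G K"
  shows "nilpotent_group G"
proof -
  obtain n where "lower_central G n \<subseteq> {\<one>}"
    using lower_central_subset_if_all_exponential[OF fin exp one_is_normal] by blast
  moreover have "\<one> \<in> lower_central G n"
    using normal_imp_subgroup[OF lower_central_normal] subgroup.one_closed by blast
  ultimately show ?thesis unfolding nilpotent_group_def using is_group by blast
qed

lemma (in group) finite_quotients_nilpotent_if_all_exponential:
  assumes exp: "\<And>K. finite_index G K \<Longrightarrow> exponential G K"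
    and N: "N \<lhd> G" and fin: "finite (carrier (G Mod N))"
  shows "nilpotent_group (G Mod N)"
proof -
  interpret N: normal N G by (rule N)
  interpret Q: group "G Mod N" by (rule N.factorgroup_is_group)
  show ?thesis using Q.nilpotent_if_all_exponential[OF fin N.exponential_Mod[OF exp]] .
qed

theorem proposition5p6:
  fixes G :: "('a, 'b) monoid_scheme"
  assumes "group G"
  shows "(carrier G = S_set G \<longleftrightarrow> (\<forall>H. finite_index G H \<longrightarrow> exponential G H))
    \<and> ((\<forall>H. finite_index G H \<longrightarrow> exponential G H) \<longleftrightarrow>
         (\<forall>N. N \<lhd> G \<and> finite (carrier (G Mod N)) \<longrightarrow> nilpotent_group (G Mod N)))
    \<and> ((\<forall>N. N \<lhd> G \<and> finite (carrier (G Mod N)) \<longrightarrow> nilpotent_group (G Mod N)) \<longleftrightarrow>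
         (\<forall>H. finite_index G H \<longrightarrow> subnormal G H))"
proof -
  interpret group G by (rule assms)
  have A_iff_B: "carrier G = S_set G \<longleftrightarrow> (\<forall>H. finite_index G H \<longrightarrow> exponential G H)"
    unfolding S_set_def exponential_def by blast
  have B_C: "\<forall>N. N \<lhd> G \<and> finite (carrier (G Mod N)) \<longrightarrow> nilpotent_group (G Mod N)"
    if "\<forall>H. finite_index G H \<longrightarrow> exponential G H"
    using finite_quotients_nilpotent_if_all_exponential that by blast
  have C_D: "\<forall>H. finite_index G H \<longrightarrow> subnormal G H"
    if "\<forall>N. N \<lhd> G \<and> finite (carrier (G Mod N)) \<longrightarrow> nilpotent_group (G Mod N)"
    using subnormal_if_finite_quotients_nilpotent that by blast
  have D_B: "\<forall>H. finite_index G H \<longrightarrow> exponential G H"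
    if "\<forall>H. finite_index G H \<longrightarrow> subnormal G H"
    using exponential_if_subnormal that by blast
  show ?thesis using A_iff_B B_C C_D D_B by blast
qed

end
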